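(* Let $k\ge 2$ be an integer. Let $E_{k+3}(C_3)$ be the Schwarzenberger bundle on $\mathbb{P}^3=\mathbb{P}(S_3)$ defined by the exact sequence $$0\to S_k\otimes\mathcal{O}_{\mathbb{P}(S_3)}(-1)\xrightarrow{M} S_{k+3}\otimes\mathcal{O}_{\mathbb{P}(S_3)}\to E_{k+3}(C_3)\to0,$$ where ${}^tM$ is the $(k+1)\times(k+4)$ matrix whose $i$-th row ($i=0,\dots,k$) has entries $X_0,X_1,X_2,X_3$ in columns $i,i+1,i+2,i+3$ and zeros elsewhere. Let $H\subset\mathbb{P}^3$ be a general plane, let $E_{k+3}(\overline{C_3}):=E_{k+3}(C_3)|_H$ (a Steiner bundle of rank 3 on $H$), and let $\overline{C_3}$ be the image of the twisted cubic $C_3\subset\mathbb{P}^{3\vee}$ under the linear projection from the point $H^\vee$, viewed as a (singular) cubic curve in the dual plane of $H$: it is the set of lines $H'\cap H\subset H$ with $H'^\vee\in C_3$. Then the set of unstable lines of $E_{k+3}(\overline{C_3})$ in $H$ is exactly $\overline{C_3}$, i.e. a line $l\subset H$ satisfies $H^0((E_{k+3}(\overline{C_3})|_l)^\vee)\neq0$ if and only if $l=H'\cap H$ for some plane $H'$ with $H'^\vee\in C_3$.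
   Context: Work over $\mathbb{C}$. $U$ is a 2-dimensional vector space, $S_i=\mathrm{Sym}^iU$, $(X_0,\dots,X_3)$ are coordinates on $\mathbb{P}^3=\mathbb{P}(S_3)$, and $C_3\subset\mathbb{P}^{3\vee}=\mathbb{P}(S_3^\vee)$ is the twisted cubic, image of $\mathbb{P}(S_1^\vee)$ by the Veronese embedding. For a plane $H'\subset\mathbb{P}^3$, $H'^\vee\in\mathbb{P}^{3\vee}$ is its dual point. For general $H$, $H^\vee\notin C_3$. *)

theory Defs
  imports Complex_Main
begin

(* Vectors of S_3 = C^4 (coordinates X_0..X_3) and of its dual are modelled as
   functions nat => complex vanishing from index 4 on.  Projective subvarieties
   are modelled by their affine cones in C^4. *)

definition V4 :: "(nat \<Rightarrow> complex) set" where
  "V4 = {x. \<forall>i\<ge>4. x i = 0}"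

definition pair4 :: "(nat \<Rightarrow> complex) \<Rightarrow> (nat \<Rightarrow> complex) \<Rightarrow> complex" where
  "pair4 a x = (\<Sum>i<4. a i * x i)"

definition plane :: "(nat \<Rightarrow> complex) \<Rightarrow> (nat \<Rightarrow> complex) set" where
  "plane a = {x \<in> V4. pair4 a x = 0}"

definition is_line :: "(nat \<Rightarrow> complex) set \<Rightarrow> bool" where
  "is_line l \<longleftrightarrow> (\<exists>p q. p \<in> V4 \<and> q \<in> V4 \<and>
      (\<forall>\<alpha> \<beta>. (\<forall>i. \<alpha> * p i + \<beta> * q i = 0) \<longrightarrow> \<alpha> = 0 \<and> \<beta> = 0) \<and>
      l = {x. \<exists>\<alpha> \<beta>. x = (\<lambda>i. \<alpha> * p i + \<beta> * q i)})"

(* twisted cubic C_3 in P^3-dual: Veronese image [s^3 : s^2 t : s t^2 : t^3]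
   of P(S_1^dual), coordinates dual to X_0..X_3 *)
definition in_C3 :: "(nat \<Rightarrow> complex) \<Rightarrow> bool" where
  "in_C3 b \<longleftrightarrow> (\<exists>s t. (s \<noteq> 0 \<or> t \<noteq> 0) \<and>
      b = (\<lambda>i. if i < 4 then s ^ (3 - i) * t ^ i else 0))"

definition tM_apply :: "nat \<Rightarrow> (nat \<Rightarrow> complex) \<Rightarrow> (nat \<Rightarrow> complex) \<Rightarrow> nat \<Rightarrow> complex" where
  "tM_apply k x v i = (\<Sum>j<4. x j * v (i + j))"

(* H^0((E_{k+3}(C_3)|_l)^dual) <> 0.  Dualising
   0 -> S_k(-1) -M-> S_{k+3} -> E -> 0 restricted to l gives
   0 -> H^0(E|_l^dual) -> S_{k+3}^dual -> S_k^dual (x) H^0(O_l(1)),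
   so H^0(E|_l^dual) = { v in C^{k+4} | tM(x) v = 0 for all x in l }. *)
definition unstable_line :: "nat \<Rightarrow> (nat \<Rightarrow> complex) set \<Rightarrow> bool" where
  "unstable_line k l \<longleftrightarrow> (\<exists>v. (\<exists>j<k+4. v j \<noteq> 0) \<and>
      (\<forall>x\<in>l. \<forall>i\<le>k. tM_apply k x v i = 0))"

end

theory Submission
  imports Defs
    "HOL-Computational_Algebra.Polynomial_Factorial"
    "HOL-Computational_Algebra.Field_as_Ring"
    "HOL-Computational_Algebra.Fundamental_Theorem_Algebra"
    "HOL-Analysis.Complex_Transcendental"
begin

(* Identify x \<in> S_3 with the cubic x_0 + x_1 z + x_2 z^2 + x_3 z^3 and a vector v with the
   functional R \<mapsto> \<Sum>_n coeff R n * v n on polynomials of degree \<le> k + 3.  Row i of tM(x) v is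
   this functional evaluated at z^i times the cubic of x, so the vectors v killed by tM(p) and
   tM(q) are the functionals vanishing on the degree-(k+3) part of the ideal (P, Q).  If P and Q
   have no common root (also at infinity) this part is everything, because k \<ge> 2 (Sylvester);
   a common root [s : t] is a point of C_3 killing the line, and then v_n = s^(k+3-n) t^n is a
   nonzero solution.  Finally a line inside the plane a lies in the plane b of a point b \<in> C_3
   iff it is their intersection, since a \<notin> C_3 makes the two planes distinct. *)

definition veronese :: "complex \<Rightarrow> complex \<Rightarrow> nat \<Rightarrow> complex" where
  "veronese s t = (\<lambda>i. if i < 4 then s ^ (3 - i) * t ^ i else 0)"

lemma in_C3_iff_veronese: "in_C3 b \<longleftrightarrow> (\<exists>s t. (s \<noteq> 0 \<or> t \<noteq> 0) \<and> b = veronese s t)"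
  by (simp add: in_C3_def veronese_def)

lemma in_C3_veronese: "s \<noteq> 0 \<or> t \<noteq> 0 \<Longrightarrow> in_C3 (veronese s t)"
  by (auto simp: in_C3_iff_veronese)

lemma in_C3_imp_V4: "in_C3 b \<Longrightarrow> b \<in> V4"
  by (auto simp: in_C3_def V4_def)

lemma in_C3_nonzero: "in_C3 b \<Longrightarrow> b \<noteq> (\<lambda>_. 0)"
proof
  assume "in_C3 b" "b = (\<lambda>_. 0)"
  then obtain s t where "s \<noteq> 0 \<or> t \<noteq> 0" "veronese s t = (\<lambda>_. 0)"
    unfolding in_C3_iff_veronese by blast
  moreover have "s ^ 3 = veronese s t 0" "t ^ 3 = veronese s t 3"
    by (simp_all add: veronese_def)
  ultimately show False by simp
qed

lemma in_C3_scale: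
  assumes "in_C3 b" "c \<noteq> 0"
  shows "in_C3 (\<lambda>i. c * b i)"
proof -
  obtain s t where st: "s \<noteq> 0 \<or> t \<noteq> 0" "b = veronese s t"
    using assms(1) by (auto simp: in_C3_iff_veronese)
  obtain r where r: "c = r ^ 3"
    using exists_complex_root[of 3 c] by auto
  have "(\<lambda>i. c * b i) = veronese (r * s) (r * t)"
  proof
    fix i
    have "i < 4 \<Longrightarrow> r ^ 3 = r ^ (3 - i) * r ^ i"
      by (simp flip: power_add)
    then show "c * b i = veronese (r * s) (r * t) i"
      by (simp add: st(2) r veronese_def power_mult_distrib)
  qed
  moreover have "r * s \<noteq> 0 \<or> r * t \<noteq> 0"
    using st(1) r assms(2) by auto
  ultimately show ?thesis
    by (simp add: in_C3_veronese)
qed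

lemma in_C3_not_multiple:
  assumes "in_C3 b" "\<not> in_C3 a"
  shows "\<not> (\<exists>c. b = (\<lambda>i. c * a i))"
proof
  assume "\<exists>c. b = (\<lambda>i. c * a i)"
  then obtain c where c: "b = (\<lambda>i. c * a i)" ..
  with in_C3_nonzero[OF assms(1)] have "c \<noteq> 0"
    by auto
  then have "a = (\<lambda>i. inverse c * b i)"
    by (simp add: c field_simps)
  with in_C3_scale[OF assms(1)] \<open>c \<noteq> 0\<close> assms(2) show False
    by simp
qed

section \<open>A line lying in two distinct planes\<close>

lemma two_coordinates_span:
  fixes W :: "('a \<Rightarrow> 'b::field) set"
  assumes closed: "\<And>y z \<alpha> \<beta>. y \<in> W \<Longrightarrow> z \<in> W \<Longrightarrow> (\<lambda>c. \<alpha> * y c + \<beta> * z c) \<in> W"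
    and coords_inj: "\<And>y. y \<in> W \<Longrightarrow> y m = 0 \<Longrightarrow> y n = 0 \<Longrightarrow> y = (\<lambda>_. 0)"
    and W: "p \<in> W" "q \<in> W" "x \<in> W"
    and indep: "\<forall>\<alpha> \<beta>. (\<forall>c. \<alpha> * p c + \<beta> * q c = 0) \<longrightarrow> \<alpha> = 0 \<and> \<beta> = 0"
  shows "\<exists>\<alpha> \<beta>. x = (\<lambda>c. \<alpha> * p c + \<beta> * q c)"
proof -
  have coeffs_zero: "\<alpha> = 0 \<and> \<beta> = 0"
    if "\<alpha> * p m + \<beta> * q m = 0" "\<alpha> * p n + \<beta> * q n = 0" for \<alpha> \<beta>
  proof -
    have "(\<lambda>c. \<alpha> * p c + \<beta> * q c) = (\<lambda>_. 0)"
      using coords_inj[OF closed[OF W(1,2)] that] .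
    then have "\<forall>c. \<alpha> * p c + \<beta> * q c = 0"
      by (simp add: fun_eq_iff)
    with indep show ?thesis
      by blast
  qed
  define D where "D = p m * q n - p n * q m"
  have "D \<noteq> 0"
  proof
    assume "D = 0"
    then have "q m * p m + (- p m) * q m = 0" "q m * p n + (- p m) * q n = 0"
      and "q n * p m + (- p n) * q m = 0" "q n * p n + (- p n) * q n = 0"
      by (simp_all add: D_def algebra_simps)
    from coeffs_zero[OF this(1,2)] coeffs_zero[OF this(3,4)] have "p m = 0" "p n = 0"
      by simp_all
    then have "(1::'b) = 0 \<and> (0::'b) = 0"
      by (intro coeffs_zero) simp_all
    then show False
      by simp
  qed
  define \<alpha> where "\<alpha> = (x m * q n - x n * q m) / D"
  define \<beta> where "\<beta> = (p m * x n - p n * x m) / D"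
  define z where "z = (\<lambda>c. \<alpha> * p c + \<beta> * q c)"
  have "z m = x m" "z n = x n"
    using \<open>D \<noteq> 0\<close> by (simp_all add: z_def \<alpha>_def \<beta>_def field_simps, simp_all add: D_def algebra_simps)
  let ?y = "\<lambda>c. 1 * x c + (- 1) * z c"
  have "?y \<in> W"
    unfolding z_def by (intro closed W)
  moreover have "?y m = 0" "?y n = 0"
    by (simp_all add: \<open>z m = x m\<close> \<open>z n = x n\<close>)
  ultimately have "?y = (\<lambda>_. 0)"
    by (rule coords_inj)
  then have "x = z"
    by (simp add: fun_eq_iff)
  then have "x = (\<lambda>c. \<alpha> * p c + \<beta> * q c)"
    by (simp add: z_def)
  then show ?thesis by blast
qed

lemma pair4_lincomb: "pair4 a (\<lambda>c. \<alpha> * y c + \<beta> * z c) = \<alpha> * pair4 a y + \<beta> * pair4 a z"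
  by (simp add: pair4_def sum_distrib_left sum.distrib algebra_simps)

lemma plane_inter_closed:
  "y \<in> plane a \<inter> plane b \<Longrightarrow> z \<in> plane a \<inter> plane b \<Longrightarrow>
     (\<lambda>c. \<alpha> * y c + \<beta> * z c) \<in> plane a \<inter> plane b"
  by (simp add: plane_def pair4_lincomb V4_def)

lemma nonzero_minor_if_not_proportional:
  assumes "a \<in> V4" "b \<in> V4" "a \<noteq> (\<lambda>_. 0)" "\<not> (\<exists>c. b = (\<lambda>i. c * a i))"
  shows "\<exists>i<4. \<exists>j<4. a i * b j - a j * b i \<noteq> 0"
proof (rule ccontr)
  assume minors: "\<not> ?thesis"
  obtain i where i: "a i \<noteq> 0"
    using assms(3) by (auto simp: fun_eq_iff)
  have "i < 4"
  proof (rule ccontr)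
    assume "\<not> i < 4"
    with assms(1) have "a i = 0"
      by (simp add: V4_def)
    with i show False ..
  qed
  have "b = (\<lambda>j. (b i / a i) * a j)"
  proof
    fix j
    show "b j = b i / a i * a j"
    proof (cases "j < 4")
      case True
      with minors \<open>i < 4\<close> have "a i * b j = a j * b i"
        by auto
      with i show ?thesis by (simp add: field_simps)
    next
      case False
      with assms(1,2) show ?thesis by (simp add: V4_def)
    qed
  qed
  then have "\<exists>c. b = (\<lambda>j. c * a j)"
    by (rule exI)
  with assms(4) show False
    by contradiction
qed

lemma plane_inter_coords_inj:
  assumes ij: "i < 4" "j < 4" "a i * b j - a j * b i \<noteq> 0"
    and mn: "{..<4} - {i, j} = {m, n}"
    and y: "y \<in> plane a \<inter> plane b" "y m = 0" "y n = 0"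
  shows "y = (\<lambda>_. 0)"
proof -
  have "i \<noteq> j"
    using ij(3) by auto
  have outside: "y c = 0" if "c \<notin> {i, j}" for c
    using that y mn by (cases "c < 4") (auto simp: plane_def V4_def)
  have pair_ij: "pair4 f y = f i * y i + f j * y j" for f
  proof -
    have "pair4 f y = (\<Sum>c\<in>{i, j}. f c * y c)"
      unfolding pair4_def using ij(1,2) outside by (intro sum.mono_neutral_right) auto
    with \<open>i \<noteq> j\<close> show ?thesis by simp
  qed
  have "a i * y i + a j * y j = 0" "b i * y i + b j * y j = 0"
    using y(1) by (simp_all add: plane_def pair_ij)
  moreover have
    "y i * (a i * b j - a j * b i) = b j * (a i * y i + a j * y j) - a j * (b i * y i + b j * y j)"
    "y j * (a i * b j - a j * b i) = a i * (b i * y i + b j * y j) - b i * (a i * y i + a j * y j)"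
    by (simp_all add: algebra_simps)
  ultimately have "y i * (a i * b j - a j * b i) = 0" "y j * (a i * b j - a j * b i) = 0"
    by simp_all
  with ij(3) have "y i = 0" "y j = 0"
    by simp_all
  show ?thesis
  proof
    fix c
    show "y c = 0"
      using outside \<open>y i = 0\<close> \<open>y j = 0\<close> by (cases "c = i \<or> c = j") auto
  qed
qed

lemma is_line_spanning_points:
  assumes "is_line l"
  obtains p q where "p \<in> l" "q \<in> l" "l = {x. \<exists>\<alpha> \<beta>. x = (\<lambda>c. \<alpha> * p c + \<beta> * q c)}"
    and "\<forall>\<alpha> \<beta>. (\<forall>c. \<alpha> * p c + \<beta> * q c = 0) \<longrightarrow> \<alpha> = 0 \<and> \<beta> = 0"
proof -
  obtain p q where indep: "\<forall>\<alpha> \<beta>. (\<forall>c. \<alpha> * p c + \<beta> * q c = 0) \<longrightarrow> \<alpha> = 0 \<and> \<beta> = 0"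
    and l: "l = {x. \<exists>\<alpha> \<beta>. x = (\<lambda>c. \<alpha> * p c + \<beta> * q c)}"
    using assms unfolding is_line_def by blast
  have "p = (\<lambda>c. 1 * p c + 0 * q c)" "q = (\<lambda>c. 0 * p c + 1 * q c)"
    by simp_all
  then have "p \<in> l" "q \<in> l"
    unfolding l by blast+
  with l indep show thesis
    using that by blast
qed

lemma line_eq_plane_inter:
  assumes "a \<in> V4" "b \<in> V4" "a \<noteq> (\<lambda>_. 0)" "\<not> (\<exists>c. b = (\<lambda>i. c * a i))"
    and "is_line l" "l \<subseteq> plane a" "l \<subseteq> plane b"
  shows "l = plane a \<inter> plane b"
proof
  show "l \<subseteq> plane a \<inter> plane b"
    using assms(6,7) by blast
  obtain p q where "p \<in> l" "q \<in> l"
    and l: "l = {x. \<exists>\<alpha> \<beta>. x = (\<lambda>c. \<alpha> * p c + \<beta> * q c)}"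
    and indep: "\<forall>\<alpha> \<beta>. (\<forall>c. \<alpha> * p c + \<beta> * q c = 0) \<longrightarrow> \<alpha> = 0 \<and> \<beta> = 0"
    using is_line_spanning_points[OF assms(5)] .
  obtain i j where ij: "i < 4" "j < 4" "a i * b j - a j * b i \<noteq> 0"
    using nonzero_minor_if_not_proportional[OF assms(1-4)] by blast
  then have "i \<noteq> j"
    by auto
  with ij have "card ({..<4::nat} - {i, j}) = 2"
    by (subst card_Diff_subset) auto
  then obtain m n where mn: "{..<4} - {i, j} = {m, n}"
    by (auto simp: card_2_iff)
  have pq_inter: "p \<in> plane a \<inter> plane b" "q \<in> plane a \<inter> plane b"
    using \<open>p \<in> l\<close> \<open>q \<in> l\<close> assms(6,7) by blast+
  show "plane a \<inter> plane b \<subseteq> l"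
  proof
    fix x assume "x \<in> plane a \<inter> plane b"
    from two_coordinates_span[OF plane_inter_closed plane_inter_coords_inj[OF ij mn]
        pq_inter this indep]
    have "\<exists>\<alpha> \<beta>. x = (\<lambda>c. \<alpha> * p c + \<beta> * q c)" .
    then show "x \<in> l"
      by (simp add: l)
  qed
qed

section \<open>Cubics and the matrix tM\<close>

definition cubic_poly :: "(nat \<Rightarrow> complex) \<Rightarrow> complex poly" where
  "cubic_poly x = (\<Sum>j<4. monom (x j) j)"

lemma coeff_cubic_poly: "coeff (cubic_poly x) n = (if n < 4 then x n else 0)"
  by (simp add: cubic_poly_def coeff_sum coeff_monom)

lemma degree_cubic_poly_le: "degree (cubic_poly x) \<le> 3"
  by (rule degree_le) (simp add: coeff_cubic_poly)

lemma degree_cubic_poly: "x 3 \<noteq> 0 \<Longrightarrow> degree (cubic_poly x) = 3"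
  using degree_cubic_poly_le[of x] le_degree[of "cubic_poly x" 3]
  by (simp add: coeff_cubic_poly)

lemma pair4_veronese_affine: "pair4 (veronese 1 z) x = poly (cubic_poly x) z"
  by (simp add: pair4_def veronese_def cubic_poly_def poly_sum poly_monom mult.commute)

lemma pair4_veronese_infinity: "pair4 (veronese 0 1) x = x 3"
  by (simp add: pair4_def veronese_def eval_nat_numeral)

definition coeff_pairing :: "nat \<Rightarrow> (nat \<Rightarrow> complex) \<Rightarrow> complex poly \<Rightarrow> complex" where
  "coeff_pairing N v R = (\<Sum>n\<le>N. coeff R n * v n)"

lemma coeff_pairing_add: "coeff_pairing N v (A + B) = coeff_pairing N v A + coeff_pairing N v B"
  by (simp add: coeff_pairing_def sum.distrib distrib_right)

lemma coeff_pairing_sum: "coeff_pairing N v (sum f S) = (\<Sum>s\<in>S. coeff_pairing N v (f s))"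
  by (simp add: coeff_pairing_def coeff_sum sum_distrib_right sum.swap[of _ S])

lemma coeff_pairing_monom: "n \<le> N \<Longrightarrow> coeff_pairing N v (monom 1 n) = v n"
  by (simp add: coeff_pairing_def coeff_monom if_distrib[where f = "\<lambda>c. c * _"] cong: if_cong)

lemma coeff_pairing_monom_mult_cubic:
  assumes "i + 3 \<le> N"
  shows "coeff_pairing N v (monom c i * cubic_poly x) = c * tM_apply k x v i"
proof -
  define F where "F n = (if n < i then 0 else c * coeff (cubic_poly x) (n - i)) * v n" for n
  have "c * tM_apply k x v i = (\<Sum>j<4. F (i + j))"
    by (simp add: tM_apply_def F_def sum_distrib_left coeff_cubic_poly mult.assoc)
  also have "\<dots> = (\<Sum>n\<in>(+) i ` {..<4}. F n)"
    by (simp add: sum.reindex)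
  also have "\<dots> = (\<Sum>n\<le>N. F n)"
  proof (rule sum.mono_neutral_left)
    show "(+) i ` {..<4} \<subseteq> {..N}"
      using assms by auto
    show "\<forall>n\<in>{..N} - (+) i ` {..<4}. F n = 0"
    proof
      fix n assume "n \<in> {..N} - (+) i ` {..<4}"
      then have "n < i \<or> 4 \<le> n - i"
        by (auto simp: image_iff) (metis add_diff_inverse_nat lessThan_iff not_less)
      then show "F n = 0"
        by (auto simp: F_def coeff_cubic_poly)
    qed
  qed simp
  finally show ?thesis
    by (simp add: coeff_pairing_def coeff_monom_mult F_def)
qed

lemma coeff_pairing_mult_cubic_eq_0:
  assumes "\<forall>i\<le>k. tM_apply k x v i = 0" "degree A \<le> k"
  shows "coeff_pairing (k + 3) v (A * cubic_poly x) = 0"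
proof -
  have "A * cubic_poly x = (\<Sum>i\<le>k. monom (coeff A i) i * cubic_poly x)"
    by (simp add: poly_as_sum_of_monoms'[OF assms(2)] sum_distrib_right[symmetric])
  moreover have "coeff_pairing (k + 3) v (monom (coeff A i) i * cubic_poly x) = 0" if "i \<le> k" for i
    using that assms(1) coeff_pairing_monom_mult_cubic[where N = "k + 3" and i = i and k = k] by simp
  ultimately show ?thesis
    by (simp add: coeff_pairing_sum)
qed

section \<open>Sylvester's lemma\<close>

lemma coprime_decomposition:
  fixes P Q R :: "'a::field_gcd poly"
  assumes "coprime P Q" "degree P > 0" "degree Q \<le> degree P"
    and "degree R \<le> n" "2 * degree P \<le> n + 1"
  shows "\<exists>X r. R = X * P + r * Q \<and> degree X + degree P \<le> n \<and> degree r < degree P"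
proof -
  have "P \<noteq> 0"
    using assms(2) by auto
  define A where "A = fst (bezout_coefficients P Q)"
  define B where "B = snd (bezout_coefficients P Q)"
  have AB: "A * P + B * Q = 1"
    using bezout_coefficients_fst_snd[of P Q] assms(1) by (simp add: A_def B_def)
  define r where "r = (R * B) mod P"
  define X where "X = R * A + ((R * B) div P) * Q"
  have "R = R * (A * P + B * Q)"
    using AB by simp
  also have "\<dots> = R * A * P + (R * B) * Q"
    by (simp add: algebra_simps)
  also have "\<dots> = R * A * P + ((R * B) div P * P + r) * Q"
    by (simp add: r_def)
  also have "\<dots> = X * P + r * Q"
    by (simp add: X_def algebra_simps)
  finally have R: "R = X * P + r * Q" .
  have "degree r < degree P"
    using degree_mod_less[OF \<open>P \<noteq> 0\<close>, of "R * B"] assms(2) unfolding r_def by auto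
  then have "degree (r * Q) \<le> n"
    using degree_mult_le[of r Q] assms(3,5) by linarith
  moreover have "X * P = R - r * Q"
    using R by simp
  ultimately have "degree (X * P) \<le> n"
    using degree_diff_le[OF assms(4)] by simp
  then have "degree X + degree P \<le> n"
    using \<open>P \<noteq> 0\<close> assms(2,5) by (cases "X = 0") (auto simp: degree_mult_eq)
  with R \<open>degree r < degree P\<close> show ?thesis
    by (intro exI[of _ X] exI[of _ r] conjI)
qed

lemma coprime_if_no_common_root:
  fixes P Q :: "complex poly"
  assumes "P \<noteq> 0" "\<And>z. poly P z \<noteq> 0 \<or> poly Q z \<noteq> 0"
  shows "coprime P Q"
proof (rule coprimeI)
  fix c assume c: "c dvd P" "c dvd Q"
  show "is_unit c"
  proof (cases "degree c = 0")
    case True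
    with c(1) assms(1) show ?thesis
      by (auto simp: is_unit_iff_degree)
  next
    case False
    then have "\<exists>z. poly c z = 0"
      by (simp add: fundamental_theorem_of_algebra constant_degree)
    then obtain z where "poly c z = 0" ..
    with c have "poly P z = 0" "poly Q z = 0"
      by (auto elim!: dvdE)
    with assms(2)[of z] show ?thesis
      by simp
  qed
qed

lemma tM_kernel_trivial_if_coprime:
  assumes "k \<ge> 2" "x 3 \<noteq> 0" "coprime (cubic_poly x) (cubic_poly y)"
    and "\<forall>i\<le>k. tM_apply k x v i = 0" "\<forall>i\<le>k. tM_apply k y v i = 0"
    and "n < k + 4"
  shows "v n = 0"
proof -
  have "degree (monom (1::complex) n) \<le> k + 3"
    using assms(6) by (simp add: degree_monom_eq)
  moreover note degree_cubic_poly[of x, OF assms(2)] degree_cubic_poly_le[of y]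
  ultimately obtain X r where R: "monom 1 n = X * cubic_poly x + r * cubic_poly y"
    and "degree X + 3 \<le> k + 3" "degree r < 3"
    using coprime_decomposition[OF assms(3), of "monom 1 n" "k + 3"] assms(1) by auto
  then have "degree X \<le> k" "degree r \<le> k"
    using assms(1) by linarith+
  have "v n = coeff_pairing (k + 3) v (monom 1 n)"
    using assms(6) by (simp add: coeff_pairing_monom)
  also have "\<dots> = 0"
    using coeff_pairing_mult_cubic_eq_0[OF assms(4) \<open>degree X \<le> k\<close>]
      coeff_pairing_mult_cubic_eq_0[OF assms(5) \<open>degree r \<le> k\<close>]
    by (simp add: R coeff_pairing_add)
  finally show ?thesis .
qed

lemma in_C3_common_zero_if_tM_kernel:
  assumes "k \<ge> 2" "\<forall>i\<le>k. tM_apply k x v i = 0" "\<forall>i\<le>k. tM_apply k y v i = 0"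
    and "\<exists>n<k + 4. v n \<noteq> 0"
  shows "\<exists>b. in_C3 b \<and> pair4 b x = 0 \<and> pair4 b y = 0"
proof -
  have common_root: "\<exists>z. poly (cubic_poly x') z = 0 \<and> poly (cubic_poly y') z = 0"
    if "x' 3 \<noteq> 0" "\<forall>i\<le>k. tM_apply k x' v i = 0" "\<forall>i\<le>k. tM_apply k y' v i = 0" for x' y'
  proof (rule ccontr)
    assume "\<not> ?thesis"
    moreover have "cubic_poly x' \<noteq> 0"
      using degree_cubic_poly[of x', OF that(1)] by auto
    ultimately have "coprime (cubic_poly x') (cubic_poly y')"
      by (intro coprime_if_no_common_root) auto
    moreover obtain n where "n < k + 4" "v n \<noteq> 0"
      using assms(4) by blast
    ultimately show False
      using tM_kernel_trivial_if_coprime[OF assms(1) that(1) _ that(2,3)] by simp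
  qed
  consider "x 3 = 0" "y 3 = 0" | "x 3 \<noteq> 0" | "y 3 \<noteq> 0"
    by blast
  then show ?thesis
  proof cases
    case 1
    then show ?thesis
      by (intro exI[of _ "veronese 0 1"]) (simp add: in_C3_veronese pair4_veronese_infinity)
  next
    case 2
    then obtain z where "poly (cubic_poly x) z = 0" "poly (cubic_poly y) z = 0"
      using common_root[OF _ assms(2,3)] by blast
    then show ?thesis
      by (intro exI[of _ "veronese 1 z"]) (simp add: in_C3_veronese pair4_veronese_affine)
  next
    case 3
    then obtain z where "poly (cubic_poly x) z = 0" "poly (cubic_poly y) z = 0"
      using common_root[OF _ assms(3,2)] by blast
    then show ?thesis
      by (intro exI[of _ "veronese 1 z"]) (simp add: in_C3_veronese pair4_veronese_affine)
  qed
qed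

lemma tM_apply_veronese_powers:
  assumes "i \<le> k"
  shows "tM_apply k x (\<lambda>n. s ^ (k + 3 - n) * t ^ n) i = s ^ (k - i) * t ^ i * pair4 (veronese s t) x"
proof -
  have "s ^ (k + 3 - (i + j)) * t ^ (i + j) = s ^ (k - i) * t ^ i * (s ^ (3 - j) * t ^ j)"
    if "j < 4" for j
  proof -
    from that assms have "k + 3 - (i + j) = (k - i) + (3 - j)"
      by simp
    then show ?thesis
      by (simp add: power_add)
  qed
  then show ?thesis
    by (simp add: tM_apply_def pair4_def veronese_def sum_distrib_left algebra_simps)
qed

lemma unstable_line_if_subset_plane_C3:
  assumes "in_C3 b" "l \<subseteq> plane b"
  shows "unstable_line k l"
proof -
  obtain s t where st: "s \<noteq> 0 \<or> t \<noteq> 0" "b = veronese s t"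
    using assms(1) unfolding in_C3_iff_veronese by blast
  define v where "v = (\<lambda>n. s ^ (k + 3 - n) * t ^ n)"
  have "\<exists>n<k + 4. v n \<noteq> 0"
  proof (cases "s = 0")
    case False
    then show ?thesis by (intro exI[of _ 0]) (simp add: v_def)
  next
    case True
    with st(1) show ?thesis by (intro exI[of _ "k + 3"]) (simp add: v_def)
  qed
  moreover have "\<forall>x\<in>l. \<forall>i\<le>k. tM_apply k x v i = 0"
    using assms(2) st(2) unfolding v_def by (auto simp: tM_apply_veronese_powers plane_def)
  ultimately show ?thesis
    unfolding unstable_line_def by blast
qed

theorem proposition5p7:
  fixes k :: nat and a :: "nat \<Rightarrow> complex" and l :: "(nat \<Rightarrow> complex) set"
  assumes "k \<ge> 2"
    and "a \<in> V4" and "a \<noteq> (\<lambda>_. 0)" and "\<not> in_C3 a"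
    and "is_line l" and "l \<subseteq> plane a"
  shows "unstable_line k l \<longleftrightarrow>
           (\<exists>b. in_C3 b \<and> l = plane a \<inter> plane b)"
proof -
  obtain p q where pq: "p \<in> l" "q \<in> l"
    and l: "l = {x. \<exists>\<alpha> \<beta>. x = (\<lambda>c. \<alpha> * p c + \<beta> * q c)}"
    using is_line_spanning_points[OF assms(5)] .
  have "unstable_line k l \<longleftrightarrow> (\<exists>b. in_C3 b \<and> l \<subseteq> plane b)"
  proof
    assume "unstable_line k l"
    then obtain v where "\<exists>n<k + 4. v n \<noteq> 0" "\<forall>x\<in>l. \<forall>i\<le>k. tM_apply k x v i = 0"
      unfolding unstable_line_def by blast
    with pq obtain b where b: "in_C3 b" "pair4 b p = 0" "pair4 b q = 0"
      using in_C3_common_zero_if_tM_kernel[OF assms(1)] by blast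
    have "l \<subseteq> plane b"
      using assms(6) b(2,3) unfolding l by (auto simp: plane_def pair4_lincomb)
    with b(1) show "\<exists>b. in_C3 b \<and> l \<subseteq> plane b"
      by blast
  qed (auto intro: unstable_line_if_subset_plane_C3)
  also have "\<dots> \<longleftrightarrow> (\<exists>b. in_C3 b \<and> l = plane a \<inter> plane b)"
  proof -
    have "l \<subseteq> plane b \<longleftrightarrow> l = plane a \<inter> plane b" if "in_C3 b" for b
      using line_eq_plane_inter[OF assms(2) in_C3_imp_V4[OF that] assms(3)
          in_C3_not_multiple[OF that assms(4)] assms(5,6)] by blast
    then show ?thesis
      by auto
  qed
  finally show ?thesis .
qed

end
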